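(* Let $\Omega\subseteq\mathbb{C}$ be a domain with $\Omega=\{\bar z:z\in\Omega\}$, $\Omega^+=\Omega\cap\{\mathrm{Im}z>0\}$, $\Omega^-=\Omega\cap\{\mathrm{Im}z<0\}$, $I=\Omega\cap\mathbb{R}$. Let $\mathcal P$ be a totally geodesic vertical plane of $\mathbb{H}^2\times\mathbb{R}$ (the product of a geodesic of $\mathbb{H}^2$ with $\mathbb{R}$) and $\sigma$ the isometric reflection of $\mathbb{H}^2\times\mathbb{R}$ across $\mathcal P$. Let $\psi:\Omega^+\cup I\to\mathbb{H}^2\times\mathbb{R}$ be a conformal $C^2$ immersion with regular vertical projection and constant mean curvature $1/2$, such that $\psi(I)\subset\mathcal P$ and the unit normal $\eta$ of $\psi$ is tangent to $\mathcal P$ along $I$. Then the map defined by $\psi(z)$ for $z\in\Omega^+\cup I$ and $\sigma(\psi(\bar z))$ for $z\in\Omega^-$ is a conformal immersion $\Omega\to\mathbb{H}^2\times\mathbb{R}$ with constant mean curvature $1/2$.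
   Context: $\mathbb{H}^2\times\mathbb{R}\subset\mathbb{L}^4=(\mathbb{R}^4,-dx_0^2+dx_1^2+dx_2^2+dx_3^2)$, $\mathbb{H}^2=\{-x_0^2+x_1^2+x_2^2=-1,x_0>0\}$. For a conformal immersion $\psi=(N,h)$, $\eta=(\hat N,u)$ denotes the unit normal tangent to $\mathbb{H}^2\times\mathbb{R}$; regular vertical projection means $u\ne0$ everywhere, and the mean curvature is taken with respect to the orientation $u>0$. *)

theory Defs
  imports "HOL-Analysis.Analysis"
begin

type_synonym L3 = "real \<times> real \<times> real"
type_synonym L4 = "L3 \<times> real"

definition lor3 :: "L3 \<Rightarrow> L3 \<Rightarrow> real" where
  "lor3 a b = (case a of (a0,a1,a2) \<Rightarrow> case b of (b0,b1,b2) \<Rightarrow> - a0*b0 + a1*b1 + a2*b2)"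

definition lor4 :: "L4 \<Rightarrow> L4 \<Rightarrow> real" where
  "lor4 p q = lor3 (fst p) (fst q) + snd p * snd q"

definition H2R :: "L4 set" where
  "H2R = {(N,h). lor3 N N = -1 \<and> fst N > 0}"

text \<open>Totally geodesic vertical plane: (geodesic of H^2 cut out by a spacelike unit
  vector n of L^3) times R, and the reflection across it.\<close>
definition vplane :: "L3 \<Rightarrow> L4 set" where
  "vplane n = {p \<in> H2R. lor3 (fst p) n = 0}"

definition vrefl :: "L3 \<Rightarrow> L4 \<Rightarrow> L4" where
  "vrefl n p = (fst p - (2 * lor3 (fst p) n) *\<^sub>R n, snd p)"

definition C2_partials ::
  "complex set \<Rightarrow> (complex \<Rightarrow> L4) \<Rightarrow> (complex \<Rightarrow> L4) \<Rightarrow> (complex \<Rightarrow> L4)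
   \<Rightarrow> (complex \<Rightarrow> L4) \<Rightarrow> (complex \<Rightarrow> L4) \<Rightarrow> (complex \<Rightarrow> L4) \<Rightarrow> (complex \<Rightarrow> L4) \<Rightarrow> bool" where
  "C2_partials S \<psi> \<psi>x \<psi>y \<psi>xx \<psi>xy \<psi>yx \<psi>yy \<longleftrightarrow>
     continuous_on S \<psi> \<and> continuous_on S \<psi>x \<and> continuous_on S \<psi>y \<and>
     continuous_on S \<psi>xx \<and> continuous_on S \<psi>xy \<and> continuous_on S \<psi>yx \<and> continuous_on S \<psi>yy \<and>
     (\<forall>z\<in>S. (\<psi> has_derivative (\<lambda>w. Re w *\<^sub>R \<psi>x z + Im w *\<^sub>R \<psi>y z)) (at z within S) \<and>
             (\<psi>x has_derivative (\<lambda>w. Re w *\<^sub>R \<psi>xx z + Im w *\<^sub>R \<psi>xy z)) (at z within S) \<and>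
             (\<psi>y has_derivative (\<lambda>w. Re w *\<^sub>R \<psi>yx z + Im w *\<^sub>R \<psi>yy z)) (at z within S))"

definition conformal_immersion ::
  "complex set \<Rightarrow> (complex \<Rightarrow> L4) \<Rightarrow> (complex \<Rightarrow> L4) \<Rightarrow> (complex \<Rightarrow> L4) \<Rightarrow> bool" where
  "conformal_immersion S \<psi> \<psi>x \<psi>y \<longleftrightarrow>
     (\<forall>z\<in>S. \<psi> z \<in> H2R \<and> lor4 (\<psi>x z) (\<psi>x z) = lor4 (\<psi>y z) (\<psi>y z) \<and>
             lor4 (\<psi>x z) (\<psi>y z) = 0 \<and> lor4 (\<psi>x z) (\<psi>x z) > 0)"

text \<open>eta = (hat N, u) is a unit normal of the surface at the point p = (N,h), tangent
  to H^2 x R, the surface having tangent vectors v1, v2.\<close>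
definition unit_normal :: "L4 \<Rightarrow> L4 \<Rightarrow> L4 \<Rightarrow> L4 \<Rightarrow> bool" where
  "unit_normal p v1 v2 \<eta> \<longleftrightarrow>
     lor3 (fst \<eta>) (fst p) = 0 \<and> lor4 \<eta> v1 = 0 \<and> lor4 \<eta> v2 = 0 \<and> lor4 \<eta> \<eta> = 1"

definition regular_vertical_projection ::
  "complex set \<Rightarrow> (complex \<Rightarrow> L4) \<Rightarrow> (complex \<Rightarrow> L4) \<Rightarrow> (complex \<Rightarrow> L4) \<Rightarrow> bool" where
  "regular_vertical_projection S \<psi> \<psi>x \<psi>y \<longleftrightarrow>
     (\<forall>z\<in>S. \<forall>\<eta>. unit_normal (\<psi> z) (\<psi>x z) (\<psi>y z) \<eta> \<longrightarrow> snd \<eta> \<noteq> 0)"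

definition cmc_half ::
  "complex set \<Rightarrow> (complex \<Rightarrow> L4) \<Rightarrow> (complex \<Rightarrow> L4) \<Rightarrow> (complex \<Rightarrow> L4)
   \<Rightarrow> (complex \<Rightarrow> L4) \<Rightarrow> (complex \<Rightarrow> L4) \<Rightarrow> bool" where
  "cmc_half S \<psi> \<psi>x \<psi>y \<psi>xx \<psi>yy \<longleftrightarrow>
     (\<forall>z\<in>S. \<exists>\<eta>. unit_normal (\<psi> z) (\<psi>x z) (\<psi>y z) \<eta> \<and> snd \<eta> > 0 \<and>
        lor4 (\<psi>xx z + \<psi>yy z) \<eta> / (2 * lor4 (\<psi>x z) (\<psi>x z)) = 1/2)"

end

theory Submission
  imports Defs
begin

text \<open>Away from the real axis the reflected surface is the image of \<open>\<psi>\<close> under the linear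
  isometry \<open>\<sigma>\<close> of \<open>\<bbbL>\<^sup>4\<close>, which preserves \<open>\<bbbH>\<^sup>2 \<times> \<bbbR>\<close> and the height, so conformality and
  the mean curvature carry over; the whole point is that the glued map is \<open>C\<^sup>2\<close> across \<open>I\<close>.
  Since \<open>\<Phi>(z) = \<sigma>(\<psi>(z\<^sup>*))\<close> flips the sign of every \<open>y\<close>-derivative, this means that along \<open>I\<close>
  the vectors \<open>\<psi>, \<psi>\<^sub>x, \<psi>\<^sub>x\<^sub>x, \<psi>\<^sub>y\<^sub>y\<close> are fixed by \<open>\<sigma>\<close> and \<open>\<psi>\<^sub>y, \<psi>\<^sub>x\<^sub>y = \<psi>\<^sub>y\<^sub>x\<close> are negated.
  The first three lie in the plane because \<open>\<psi>(I)\<close> does. The vector \<open>\<psi>\<^sub>y\<close> is orthogonal to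
  \<open>(N,0)\<close>, \<open>\<psi>\<^sub>x\<close> and \<open>\<eta>\<close>, which along \<open>I\<close> complete \<open>(n,0)\<close> to an orthogonal frame, so \<open>\<psi>\<^sub>y\<close>
  is a multiple of \<open>(n,0)\<close>; differentiating along \<open>I\<close> gives the same for \<open>\<psi>\<^sub>y\<^sub>x\<close>, and
  Schwarz's theorem for \<open>\<psi>\<^sub>x\<^sub>y\<close>. Finally, differentiating \<open>|\<psi>\<^sub>x|\<^sup>2 = |\<psi>\<^sub>y|\<^sup>2\<close> in \<open>y\<close> gives
  \<open>\<langle>\<psi>\<^sub>y, \<psi>\<^sub>y\<^sub>y\<rangle> = \<langle>\<psi>\<^sub>x, \<psi>\<^sub>x\<^sub>y\<rangle> = 0\<close>, i.e. \<open>\<psi>\<^sub>y\<^sub>y \<perp> n\<close>.\<close>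

section \<open>Lorentzian algebra\<close>

lemma lor3_components:
  "lor3 a b = - fst a * fst b + fst (snd a) * fst (snd b) + snd (snd a) * snd (snd b)"
  by (simp add: lor3_def split: prod.splits)

lemma lor3_commute: "lor3 a b = lor3 b a"
  by (simp add: lor3_components algebra_simps)

lemma lor4_commute: "lor4 p q = lor4 q p"
  by (simp add: lor4_def lor3_commute algebra_simps)

lemma lor3_bilinear [simp]:
  "lor3 (a + b) c = lor3 a c + lor3 b c" "lor3 c (a + b) = lor3 c a + lor3 c b"
  "lor3 (a - b) c = lor3 a c - lor3 b c" "lor3 c (a - b) = lor3 c a - lor3 c b"
  "lor3 (- a) c = - lor3 a c" "lor3 c (- a) = - lor3 c a"
  "lor3 (r *\<^sub>R a) c = r * lor3 a c" "lor3 c (r *\<^sub>R a) = r * lor3 c a"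
  by (simp_all add: lor3_components algebra_simps)

lemma lor4_bilinear [simp]:
  "lor4 (p + q) r = lor4 p r + lor4 q r" "lor4 r (p + q) = lor4 r p + lor4 r q"
  "lor4 (- p) r = - lor4 p r" "lor4 r (- p) = - lor4 r p"
  "lor4 (c *\<^sub>R p) r = c * lor4 p r" "lor4 r (c *\<^sub>R p) = c * lor4 r p"
  by (simp_all add: lor4_def algebra_simps)

lemma bounded_bilinear_lor3: "bounded_bilinear lor3"
proof -
  have eq: "lor3 = (\<lambda>a b. inner a (- fst b, snd b))"
    by (auto simp: fun_eq_iff lor3_components inner_prod_def)
  show ?thesis
    unfolding eq by (intro bounded_bilinear.comp[OF bounded_bilinear_inner] bounded_linear_Pair
        bounded_linear_minus bounded_linear_fst bounded_linear_snd bounded_linear_ident)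
qed

lemma bounded_bilinear_lor4: "bounded_bilinear lor4"
proof -
  have eq: "lor4 = (\<lambda>p q. inner p ((- fst (fst q), snd (fst q)), snd q))"
    by (auto simp: fun_eq_iff lor4_def lor3_components inner_prod_def)
  show ?thesis
    unfolding eq by (intro bounded_bilinear.comp[OF bounded_bilinear_inner] bounded_linear_Pair
        bounded_linear_minus bounded_linear_compose[OF bounded_linear_fst]
        bounded_linear_compose[OF bounded_linear_snd] bounded_linear_fst bounded_linear_snd
        bounded_linear_ident)
qed

definition lorentz_cross :: "L3 \<Rightarrow> L3 \<Rightarrow> L3" where
  "lorentz_cross N n = (- (fst (snd N) * snd (snd n) - snd (snd N) * fst (snd n)),
                        snd (snd N) * fst n - fst N * snd (snd n),
                        fst N * fst (snd n) - fst (snd N) * fst n)"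

lemma lorentz_frame_expansion:
  assumes "lor3 N N = -1" "lor3 n n = 1" "lor3 N n = 0"
  shows "V = (- lor3 V N) *\<^sub>R N + lor3 V n *\<^sub>R n
             + lor3 V (lorentz_cross N n) *\<^sub>R lorentz_cross N n"
proof -
  obtain N0 N1 N2 n0 n1 n2 V0 V1 V2 where v: "N = (N0,N1,N2)" "n = (n0,n1,n2)" "V = (V0,V1,V2)"
    by (metis prod.collapse)
  have h: "- N0*N0 + N1*N1 + N2*N2 = -1" "- n0*n0 + n1*n1 + n2*n2 = 1" "- N0*n0 + N1*n1 + N2*n2 = 0"
    using assms by (auto simp: v lor3_components)
  have "V0 = - (- V0*N0 + V1*N1 + V2*N2) * N0 + (- V0*n0 + V1*n1 + V2*n2) * n0
     + (- V0 * (- (N1*n2 - N2*n1)) + V1 * (N2*n0 - N0*n2) + V2 * (N0*n1 - N1*n0)) * (- (N1*n2 - N2*n1))"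
    "V1 = - (- V0*N0 + V1*N1 + V2*N2) * N1 + (- V0*n0 + V1*n1 + V2*n2) * n1
     + (- V0 * (- (N1*n2 - N2*n1)) + V1 * (N2*n0 - N0*n2) + V2 * (N0*n1 - N1*n0)) * (N2*n0 - N0*n2)"
    "V2 = - (- V0*N0 + V1*N1 + V2*N2) * N2 + (- V0*n0 + V1*n1 + V2*n2) * n2
     + (- V0 * (- (N1*n2 - N2*n1)) + V1 * (N2*n0 - N0*n2) + V2 * (N0*n1 - N1*n0)) * (N0*n1 - N1*n0)"
    using h by algebra+
  then show ?thesis by (simp add: v lor3_components lorentz_cross_def)
qed

lemma lorentz_cross_orthonormal:
  assumes "lor3 N N = -1" "lor3 n n = 1" "lor3 N n = 0"
  shows "lor3 (lorentz_cross N n) (lorentz_cross N n) = 1"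
    "lor3 (lorentz_cross N n) N = 0" "lor3 (lorentz_cross N n) n = 0"
proof -
  obtain N0 N1 N2 n0 n1 n2 where v: "N = (N0,N1,N2)" "n = (n0,n1,n2)"
    by (metis prod.collapse)
  have h: "- N0*N0 + N1*N1 + N2*N2 = -1" "- n0*n0 + n1*n1 + n2*n2 = 1" "- N0*n0 + N1*n1 + N2*n2 = 0"
    using assms by (auto simp: v lor3_components)
  show "lor3 (lorentz_cross N n) (lorentz_cross N n) = 1"
    using h unfolding v lor3_components lorentz_cross_def by simp algebra
  show "lor3 (lorentz_cross N n) N = 0" "lor3 (lorentz_cross N n) n = 0"
    unfolding v lor3_components lorentz_cross_def by simp_all algebra+
qed

lemma orthogonal_to_orthogonal_pair_in_plane:
  fixes u v w :: "real \<times> real"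
  assumes "inner v v = 1" "inner u v = 0" "u \<noteq> 0" "inner u w = 0" "inner v w = 0"
  shows "w = 0"
proof -
  obtain b x g e a y where uvw: "u = (b, x)" "v = (g, e)" "w = (a, y)" by (metis prod.collapse)
  have v: "g*g + e*e = 1" and uv: "b*g + x*e = 0" and uw: "b*a + x*y = 0" and vw: "g*a + e*y = 0"
    using assms by (simp_all add: uvw inner_prod_def)
  define k j where "k = y*g - a*e" and "j = x*g - b*e"
  have a: "a = - e * k" and y: "y = g * k" unfolding k_def using v vw by algebra+
  have b: "b = - e * j" and x: "x = g * j" unfolding j_def using v uv by algebra+
  have "k * j = 0" using v uw a y b x by algebra
  moreover have "j \<noteq> 0" using assms(3) b x uvw by (auto simp: zero_prod_def)
  ultimately show "w = 0" using a y uvw by (simp add: zero_prod_def)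
qed

lemma lor4_orthogonal_complement_of_frame:
  assumes N: "lor3 N N = -1" and n: "lor3 n n = 1" "lor3 N n = 0"
    and X: "lor3 (fst X) N = 0" "lor3 (fst X) n = 0" "lor4 X X > 0"
    and E: "lor3 (fst E) N = 0" "lor3 (fst E) n = 0" "lor4 E E = 1" "lor4 E X = 0"
    and Y: "lor3 (fst Y) N = 0" "lor4 Y X = 0" "lor4 Y E = 0"
  shows "Y = (lor3 (fst Y) n *\<^sub>R n, 0)"
proof -
  let ?m = "lorentz_cross N n"
  note m = lorentz_cross_orthonormal[OF N n]
  have nm: "lor3 n ?m = 0" using m(3) lor3_commute by metis
  define a b c g where "a = lor3 (fst Y) ?m" and "b = lor3 (fst X) ?m" and "c = lor3 (fst Y) n"
    and "g = lor3 (fst E) ?m"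
  note frame = lorentz_frame_expansion[OF N n]
  have X3: "fst X = b *\<^sub>R ?m" using frame[of "fst X"] X by (simp add: b_def)
  have E3: "fst E = g *\<^sub>R ?m" using frame[of "fst E"] E by (simp add: g_def)
  have Y3: "fst Y = c *\<^sub>R n + a *\<^sub>R ?m" using frame[of "fst Y"] Y by (simp add: a_def c_def)
  \<comment> \<open>In the coordinates along \<open>?m\<close> and the height the claim becomes planar.\<close>
  have "b * a + snd Y * snd X = 0" "g * a + snd Y * snd E = 0" "b * g + snd E * snd X = 0"
    "g * g + snd E * snd E = 1" "b * b + snd X * snd X > 0"
    using X E Y by (simp_all add: lor4_def X3 E3 Y3 m nm)
  then have "inner (g, snd E) (g, snd E) = 1" "inner (b, snd X) (g, snd E) = 0" "(b, snd X) \<noteq> 0"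
    "inner (b, snd X) (a, snd Y) = 0" "inner (g, snd E) (a, snd Y) = 0"
    by (auto simp: inner_prod_def zero_prod_def algebra_simps)
  then have "(a, snd Y) = 0" by (rule orthogonal_to_orthogonal_pair_in_plane)
  then have "a = 0" "snd Y = 0" by (simp_all add: zero_prod_def)
  then show ?thesis using Y3 c_def by (simp add: prod_eq_iff)
qed

section \<open>The reflection across a vertical plane\<close>

lemma vrefl_snd [simp]: "snd (vrefl n p) = snd p"
  by (simp add: vrefl_def)

lemma bounded_linear_vrefl: "bounded_linear (vrefl n)"
  unfolding linear_conv_bounded_linear[symmetric]
  by (rule linearI) (simp_all add: vrefl_def algebra_simps)

lemma vrefl_lor3:
  assumes "lor3 n n = 1"
  shows "lor3 (fst (vrefl n p)) (fst (vrefl n q)) = lor3 (fst p) (fst q)"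
  using assms
  by (simp add: vrefl_def lor3_commute[of n "fst p"] lor3_commute[of n "fst q"] algebra_simps)

lemma vrefl_lor4:
  assumes "lor3 n n = 1"
  shows "lor4 (vrefl n p) (vrefl n q) = lor4 p q"
  using vrefl_lor3[OF assms] by (simp add: lor4_def)

lemma vrefl_fixes_plane: "lor3 (fst p) n = 0 \<Longrightarrow> vrefl n p = p"
  by (simp add: vrefl_def)

lemma vrefl_negates_normal_line:
  assumes "lor3 n n = 1" "p = (c *\<^sub>R n, 0)"
  shows "- vrefl n p = p"
  using assms by (simp add: vrefl_def algebra_simps flip: scaleR_2)

text \<open>A reversed Cauchy--Schwarz inequality: unit timelike vectors in opposite time cones
  have positive Lorentz product.\<close>

lemma future_timelike_of_lor3_neg:
  assumes a: "lor3 a a = -1" and b: "lor3 b b = -1" "fst b > 0" and ab: "lor3 a b < 0"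
  shows "fst a > 0"
proof (rule ccontr)
  obtain a0 a1 a2 b0 b1 b2 where v: "a = (a0,a1,a2)" "b = (b0,b1,b2)"
    by (metis prod.collapse)
  assume "\<not> fst a > 0"
  then have "- a0 * b0 \<ge> 0" using b by (simp add: v mult_nonpos_nonneg)
  have sq: "a1*a1 + a2*a2 = a0*a0 - 1" "b1*b1 + b2*b2 = b0*b0 - 1"
    using a b by (simp_all add: v lor3_components)
  have "a0*a0 \<ge> 1" "b0*b0 \<ge> 1"
    using sq zero_le_square[of a1] zero_le_square[of a2] zero_le_square[of b1] zero_le_square[of b2]
    by linarith+
  have "(a1*b1 + a2*b2) * (a1*b1 + a2*b2) \<le> (a1*a1 + a2*a2) * (b1*b1 + b2*b2)"
    using zero_le_square[of "a1*b2 - a2*b1"] by (simp add: algebra_simps)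
  also have "\<dots> < (a0*b0) * (a0*b0)"
    unfolding sq using \<open>a0*a0 \<ge> 1\<close> \<open>b0*b0 \<ge> 1\<close> by (simp add: algebra_simps)
  finally have "\<bar>a1*b1 + a2*b2\<bar> < \<bar>a0*b0\<bar>"
    using abs_le_square_iff[of "a0*b0" "a1*b1 + a2*b2"] by (simp add: power2_eq_square)
  then show False using ab \<open>- a0 * b0 \<ge> 0\<close> by (simp add: v lor3_components abs_if split: if_splits)
qed

lemma vrefl_H2R:
  assumes n: "lor3 n n = 1" and p: "p \<in> H2R"
  shows "vrefl n p \<in> H2R"
proof -
  have N: "lor3 (fst p) (fst p) = -1" "fst (fst p) > 0" using p by (auto simp: H2R_def)
  have "lor3 (fst (vrefl n p)) (fst (vrefl n p)) = -1" using vrefl_lor3[OF n] N by simp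
  moreover have "lor3 (fst (vrefl n p)) (fst p) = -1 - 2 * (lor3 (fst p) n)\<^sup>2"
    using n N by (simp add: vrefl_def lor3_commute[of n "fst p"] power2_eq_square algebra_simps)
  ultimately have "fst (fst (vrefl n p)) > 0"
    using future_timelike_of_lor3_neg N by (smt (verit) zero_le_power2)
  then show ?thesis using \<open>lor3 (fst (vrefl n p)) _ = -1\<close> by (simp add: H2R_def case_prod_beta)
qed

section \<open>One-sided calculus on a closed half-plane\<close>

lemma has_vector_derivative_along_line:
  fixes f :: "'a::real_normed_vector \<Rightarrow> 'b::real_normed_vector"
  assumes "(f has_derivative f') (at (q + t *\<^sub>R d) within S)" "(\<lambda>t. q + t *\<^sub>R d) ` T \<subseteq> S"
  shows "((\<lambda>t. f (q + t *\<^sub>R d)) has_vector_derivative f' d) (at t within T)"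
proof -
  have "((\<lambda>t. q + t *\<^sub>R d) has_vector_derivative d) (at t within T)"
    by (auto intro!: derivative_eq_intros simp: has_vector_derivative_def)
  from vector_derivative_diff_chain_within[OF this has_derivative_subset[OF assms]]
  show ?thesis by (simp add: o_def)
qed

lemma has_derivative_zero_along_segment:
  fixes f :: "'a::real_normed_vector \<Rightarrow> 'b::real_normed_vector"
  assumes "(f has_derivative f') (at q within S)" "e > 0"
    and "\<And>t. t \<in> {0..e} \<Longrightarrow> q + t *\<^sub>R d \<in> S \<and> f (q + t *\<^sub>R d) = 0"
  shows "f' d = 0"
proof -
  have "((\<lambda>t. f (q + t *\<^sub>R d)) has_vector_derivative f' d) (at 0 within {0..e})"
    using assms by (intro has_vector_derivative_along_line) auto
  moreover have "((\<lambda>t. f (q + t *\<^sub>R d)) has_vector_derivative 0) (at 0 within {0..e})"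
    by (rule has_vector_derivative_transform_within[OF has_vector_derivative_const zero_less_one])
      (use assms in auto)
  moreover have "at (0::real) within {0..e} \<noteq> bot"
    using at_within_Icc_at_right[OF assms(2)] by simp
  ultimately show ?thesis using vector_derivative_unique_within by blast
qed

lemma open_contains_corner_square:
  assumes "open \<Omega>" "z \<in> \<Omega>"
  obtains e where "e > 0" "\<And>s t. s \<in> {0..e} \<Longrightarrow> t \<in> {0..e} \<Longrightarrow> z + Complex s t \<in> \<Omega>"
proof -
  obtain r where r: "r > 0" "ball z r \<subseteq> \<Omega>" using assms open_contains_ball by blast
  have "z + Complex s t \<in> \<Omega>" if "s \<in> {0..r/3}" "t \<in> {0..r/3}" for s t
  proof -
    have "norm (Complex s t) \<le> \<bar>s\<bar> + \<bar>t\<bar>" using cmod_le[of "Complex s t"] by simp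
    then have "dist z (z + Complex s t) < r" using that r(1) by (simp add: dist_norm)
    then show ?thesis using r(2) by auto
  qed
  then show ?thesis using r(1) that[of "r/3"] by simp
qed

lemma real_mvt_within:
  fixes f f' :: "real \<Rightarrow> real"
  assumes "a < b" "\<And>x. x \<in> {a..b} \<Longrightarrow> (f has_real_derivative f' x) (at x within {a..b})"
  obtains x where "x \<in> {a<..<b}" "f b - f a = (b - a) * f' x"
  using mvt_simple[OF assms(1), of f "\<lambda>x u. f' x * u"] assms(2) that
  by (auto simp: has_field_derivative_def mult.commute[of _ "f' _"])

lemma second_difference_mean_value:
  fixes G Gx Gxy :: "real \<Rightarrow> real \<Rightarrow> real"
  assumes h: "0 < h" "h \<le> e"
    and dx: "\<And>s t. s \<in> {0..e} \<Longrightarrow> t \<in> {0..e} \<Longrightarrow>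
               ((\<lambda>s. G s t) has_real_derivative Gx s t) (at s within {0..e})"
    and dxy: "\<And>s t. s \<in> {0..e} \<Longrightarrow> t \<in> {0..e} \<Longrightarrow>
               ((\<lambda>t. Gx s t) has_real_derivative Gxy s t) (at t within {0..e})"
  obtains \<xi> \<eta> where "\<xi> \<in> {0<..<h}" "\<eta> \<in> {0<..<h}" "G h h - G h 0 - G 0 h + G 0 0 = h * h * Gxy \<xi> \<eta>"
proof -
  have sub: "{0..h} \<subseteq> {0..e}" using h by auto
  obtain \<xi> where \<xi>: "\<xi> \<in> {0<..<h}" "(G h h - G h 0) - (G 0 h - G 0 0) = h * (Gx \<xi> h - Gx \<xi> 0)"
    by (rule real_mvt_within[of 0 h "\<lambda>s. G s h - G s 0"])
      (use h sub in \<open>auto intro!: DERIV_diff has_field_derivative_subset[OF dx sub]\<close>)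
  obtain \<eta> where \<eta>: "\<eta> \<in> {0<..<h}" "Gx \<xi> h - Gx \<xi> 0 = h * Gxy \<xi> \<eta>"
    by (rule real_mvt_within[of 0 h "Gx \<xi>"])
      (use h sub \<xi>(1) in \<open>auto intro!: has_field_derivative_subset[OF dxy sub]\<close>)
  show ?thesis using that[OF \<xi>(1) \<eta>(1)] \<xi>(2) \<eta>(2) by (simp add: algebra_simps)
qed

text \<open>Schwarz's theorem at the corner of a square, where only one-sided derivatives exist.
  By the mean value theorem, applied in either order, the second difference over \<open>[0,h]\<^sup>2\<close>
  is \<open>h\<^sup>2 G\<^sub>x\<^sub>y\<close> and also \<open>h\<^sup>2 G\<^sub>y\<^sub>x\<close> at points of \<open>(0,h)\<^sup>2\<close>; now let \<open>h \<rightarrow> 0\<close>.\<close>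

lemma mixed_partials_eq_at_corner:
  fixes G Gx Gy Gxy Gyx :: "real \<Rightarrow> real \<Rightarrow> real"
  assumes e: "e > 0"
    and dx: "\<And>s t. s \<in> {0..e} \<Longrightarrow> t \<in> {0..e} \<Longrightarrow>
               ((\<lambda>s. G s t) has_real_derivative Gx s t) (at s within {0..e})"
    and dy: "\<And>s t. s \<in> {0..e} \<Longrightarrow> t \<in> {0..e} \<Longrightarrow>
               ((\<lambda>t. G s t) has_real_derivative Gy s t) (at t within {0..e})"
    and dxy: "\<And>s t. s \<in> {0..e} \<Longrightarrow> t \<in> {0..e} \<Longrightarrow>
               ((\<lambda>t. Gx s t) has_real_derivative Gxy s t) (at t within {0..e})"
    and dyx: "\<And>s t. s \<in> {0..e} \<Longrightarrow> t \<in> {0..e} \<Longrightarrow>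
               ((\<lambda>s. Gy s t) has_real_derivative Gyx s t) (at s within {0..e})"
    and cxy: "continuous (at (0, 0) within {0..e} \<times> {0..e}) (\<lambda>p. Gxy (fst p) (snd p))"
    and cyx: "continuous (at (0, 0) within {0..e} \<times> {0..e}) (\<lambda>p. Gyx (fst p) (snd p))"
  shows "Gxy 0 0 = Gyx 0 0"
proof (rule ccontr)
  assume "Gxy 0 0 \<noteq> Gyx 0 0"
  define \<epsilon> where "\<epsilon> = \<bar>Gxy 0 0 - Gyx 0 0\<bar> / 2"
  have "\<epsilon> > 0" using \<open>Gxy 0 0 \<noteq> Gyx 0 0\<close> by (simp add: \<epsilon>_def)
  obtain \<delta>1 \<delta>2 where \<delta>: "\<delta>1 > 0" "\<delta>2 > 0"
    and near: "\<And>p. p \<in> {0..e} \<times> {0..e} \<Longrightarrow> dist p (0, 0) < \<delta>1 \<Longrightarrow>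
                  \<bar>Gxy (fst p) (snd p) - Gxy 0 0\<bar> < \<epsilon>"
      "\<And>p. p \<in> {0..e} \<times> {0..e} \<Longrightarrow> dist p (0, 0) < \<delta>2 \<Longrightarrow>
                  \<bar>Gyx (fst p) (snd p) - Gyx 0 0\<bar> < \<epsilon>"
    using cxy cyx \<open>\<epsilon> > 0\<close> unfolding continuous_within_eps_delta dist_real_def by fastforce
  define h where "h = min e (min \<delta>1 \<delta>2) / 2"
  have h: "0 < h" "h \<le> e" "2 * h \<le> \<delta>1" "2 * h \<le> \<delta>2" using e \<delta> by (auto simp: h_def)
  have close: "dist (s, t) (0, 0) < 2 * h" if "s \<in> {0<..<h}" "t \<in> {0<..<h}" for s t
    using sqrt_sum_squares_le_sum_abs[of s t] that by (simp add: dist_Pair_Pair)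
  obtain \<xi> \<eta> where \<xi>\<eta>: "\<xi> \<in> {0<..<h}" "\<eta> \<in> {0<..<h}"
    "G h h - G h 0 - G 0 h + G 0 0 = h * h * Gxy \<xi> \<eta>"
    using second_difference_mean_value[OF h(1,2) dx dxy] by blast
  obtain \<eta>' \<xi>' where \<xi>\<eta>': "\<eta>' \<in> {0<..<h}" "\<xi>' \<in> {0<..<h}"
    "G h h - G 0 h - G h 0 + G 0 0 = h * h * Gyx \<xi>' \<eta>'"
    using second_difference_mean_value[of h e "\<lambda>s t. G t s" "\<lambda>s t. Gy t s" "\<lambda>s t. Gyx t s"]
      h(1,2) dy dyx by blast
  have "h * h * Gxy \<xi> \<eta> = h * h * Gyx \<xi>' \<eta>'" using \<xi>\<eta>(3) \<xi>\<eta>'(3) by linarith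
  then have "Gxy \<xi> \<eta> = Gyx \<xi>' \<eta>'" using h(1) by simp
  moreover have "\<bar>Gxy \<xi> \<eta> - Gxy 0 0\<bar> < \<epsilon>"
    using near(1)[of "(\<xi>, \<eta>)"] close[OF \<xi>\<eta>(1,2)] \<xi>\<eta>(1,2) h by auto
  moreover have "\<bar>Gyx \<xi>' \<eta>' - Gyx 0 0\<bar> < \<epsilon>"
    using near(2)[of "(\<xi>', \<eta>')"] close[OF \<xi>\<eta>'(2,1)] \<xi>\<eta>'(1,2) h by auto
  ultimately show False unfolding \<epsilon>_def by (simp add: abs_if split: if_splits)
qed

lemma has_derivative_real_direction_zero:
  assumes "open \<Omega>" "z \<in> \<Omega>" "Im z = 0"
    and "(f has_derivative f') (at z within \<Omega> \<inter> {z. 0 \<le> Im z})"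
    and "\<And>w. w \<in> \<Omega> \<Longrightarrow> Im w = 0 \<Longrightarrow> f w = 0"
  shows "f' 1 = 0"
proof -
  obtain e where "e > 0" "\<And>s t. s \<in> {0..e} \<Longrightarrow> t \<in> {0..e} \<Longrightarrow> z + Complex s t \<in> \<Omega>"
    using open_contains_corner_square[OF assms(1,2)] by blast
  moreover have "z + s *\<^sub>R 1 = z + Complex s 0" for s by (simp add: complex_eq_iff)
  ultimately show ?thesis
    using assms(3,5) by (intro has_derivative_zero_along_segment[OF assms(4)]) auto
qed

lemma has_derivative_normal_direction_zero:
  assumes "open \<Omega>" "z \<in> \<Omega>" "Im z = 0"
    and "(f has_derivative f') (at z within \<Omega> \<inter> {z. 0 \<le> Im z})"
    and "\<And>w. w \<in> \<Omega> \<Longrightarrow> Im w \<ge> 0 \<Longrightarrow> f w = 0"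
  shows "f' \<i> = 0"
proof -
  obtain e where "e > 0" "\<And>s t. s \<in> {0..e} \<Longrightarrow> t \<in> {0..e} \<Longrightarrow> z + Complex s t \<in> \<Omega>"
    using open_contains_corner_square[OF assms(1,2)] by blast
  moreover have "z + t *\<^sub>R \<i> = z + Complex 0 t" for t by (simp add: complex_eq_iff)
  ultimately show ?thesis
    using assms(3,5) by (intro has_derivative_zero_along_segment[OF assms(4)]) auto
qed

lemma partial_derivatives_on_corner_square:
  assumes f: "\<And>w. w \<in> U \<Longrightarrow> (f has_derivative (\<lambda>v. Re v *\<^sub>R fx w + Im v *\<^sub>R fy w)) (at w within U)"
    and square: "\<And>s t. s \<in> {0..e} \<Longrightarrow> t \<in> {0..e} \<Longrightarrow> z + Complex s t \<in> U"
    and st: "s \<in> {0..e}" "t \<in> {0..e}"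
  shows "((\<lambda>s. f (z + Complex s t)) has_vector_derivative fx (z + Complex s t)) (at s within {0..e})"
    and "((\<lambda>t. f (z + Complex s t)) has_vector_derivative fy (z + Complex s t)) (at t within {0..e})"
proof -
  let ?w = "z + Complex s t"
  have x: "z + Complex s' t = (z + Complex 0 t) + s' *\<^sub>R 1" for s' by (simp add: complex_eq_iff)
  show "((\<lambda>s. f (z + Complex s t)) has_vector_derivative fx ?w) (at s within {0..e})"
    using has_vector_derivative_along_line[of f "\<lambda>v. Re v *\<^sub>R fx ?w + Im v *\<^sub>R fy ?w"
        "z + Complex 0 t" s 1 U "{0..e}"] f[OF square[OF st]] square st(2)
    by (auto simp: image_subset_iff simp flip: x)
  have y: "z + Complex s t' = (z + Complex s 0) + t' *\<^sub>R \<i>" for t' by (simp add: complex_eq_iff)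
  show "((\<lambda>t. f (z + Complex s t)) has_vector_derivative fy ?w) (at t within {0..e})"
    using has_vector_derivative_along_line[of f "\<lambda>v. Re v *\<^sub>R fx ?w + Im v *\<^sub>R fy ?w"
        "z + Complex s 0" t \<i> U "{0..e}"] f[OF square[OF st]] square st(1)
    by (auto simp: image_subset_iff simp flip: y)
qed

lemma C2_partials_mixed_eq:
  assumes "open \<Omega>" and C2: "C2_partials (\<Omega> \<inter> {z. 0 \<le> Im z}) \<psi> \<psi>x \<psi>y \<psi>xx \<psi>xy \<psi>yx \<psi>yy"
    and z: "z \<in> \<Omega>" "0 \<le> Im z"
  shows "\<psi>xy z = \<psi>yx z"
proof -
  let ?U = "\<Omega> \<inter> {z. 0 \<le> Im z}" and ?P = "\<lambda>p. z + Complex (fst p) (snd p)"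
  obtain e where e: "e > 0" "\<And>s t. s \<in> {0..e} \<Longrightarrow> t \<in> {0..e} \<Longrightarrow> z + Complex s t \<in> \<Omega>"
    using open_contains_corner_square[OF assms(1) z(1)] by blast
  then have square: "z + Complex s t \<in> ?U" if "s \<in> {0..e}" "t \<in> {0..e}" for s t
    using that z(2) by simp
  \<comment> \<open>Pair everything with \<open>c\<close> to reduce to the scalar case, which then gives \<open>\<langle>c, c\<rangle> = 0\<close>.\<close>
  define c where "c = \<psi>xy z - \<psi>yx z"
  have scalar: "((\<lambda>x. inner (g x) c) has_real_derivative inner g' c) F"
    if "(g has_vector_derivative g') F" for g :: "real \<Rightarrow> L4" and g' F
    using bounded_linear.has_vector_derivative[OF bounded_linear_inner_left that]
    by (simp add: has_real_derivative_iff_has_vector_derivative)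
  have continuous: "continuous (at (0, 0) within {0..e} \<times> {0..e}) (\<lambda>p. inner (f (?P p)) c)"
    if "continuous_on ?U f" for f :: "complex \<Rightarrow> L4"
  proof -
    have "continuous_on ({0..e} \<times> {0..e}) (\<lambda>p. inner (f (?P p)) c)"
      using square by (intro continuous_intros continuous_on_compose2[OF that]) auto
    then show ?thesis using e(1) by (simp add: continuous_on_eq_continuous_within)
  qed
  have d0: "\<And>w. w \<in> ?U \<Longrightarrow> (\<psi> has_derivative (\<lambda>v. Re v *\<^sub>R \<psi>x w + Im v *\<^sub>R \<psi>y w)) (at w within ?U)"
    and d1: "\<And>w. w \<in> ?U \<Longrightarrow> (\<psi>x has_derivative (\<lambda>v. Re v *\<^sub>R \<psi>xx w + Im v *\<^sub>R \<psi>xy w)) (at w within ?U)"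
    and d2: "\<And>w. w \<in> ?U \<Longrightarrow> (\<psi>y has_derivative (\<lambda>v. Re v *\<^sub>R \<psi>yx w + Im v *\<^sub>R \<psi>yy w)) (at w within ?U)"
    and "continuous_on ?U \<psi>xy" "continuous_on ?U \<psi>yx"
    using C2 by (simp_all add: C2_partials_def)
  note pd0 = partial_derivatives_on_corner_square[OF d0 square]
    and pd1 = partial_derivatives_on_corner_square[OF d1 square]
    and pd2 = partial_derivatives_on_corner_square[OF d2 square]
  have "inner (\<psi>xy (z + Complex 0 0)) c = inner (\<psi>yx (z + Complex 0 0)) c"
    apply (rule mixed_partials_eq_at_corner[OF e(1),
          where G = "\<lambda>s t. inner (\<psi> (z + Complex s t)) c" and Gx = "\<lambda>s t. inner (\<psi>x (z + Complex s t)) c"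
          and Gy = "\<lambda>s t. inner (\<psi>y (z + Complex s t)) c"
          and Gxy = "\<lambda>s t. inner (\<psi>xy (z + Complex s t)) c"
          and Gyx = "\<lambda>s t. inner (\<psi>yx (z + Complex s t)) c"])
    subgoal by (rule scalar, rule pd0(1))
    subgoal by (rule scalar, rule pd0(2))
    subgoal by (rule scalar, rule pd1(2))
    subgoal by (rule scalar, rule pd2(1))
    subgoal by (rule continuous) fact
    subgoal by (rule continuous) fact
    done
  moreover have "z + Complex 0 0 = z" by (simp add: complex_eq_iff)
  ultimately have "inner c c = 0" by (simp add: c_def inner_diff_left)
  then show ?thesis by (simp add: c_def)
qed

lemma has_derivative_real_direction_kernel:
  assumes "open \<Omega>" "w \<in> \<Omega>" "Im w = 0" "bounded_linear L"
    and "(f has_derivative (\<lambda>v. Re v *\<^sub>R X + Im v *\<^sub>R Y)) (at w within \<Omega> \<inter> {z. 0 \<le> Im z})"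
    and "\<And>u. u \<in> \<Omega> \<Longrightarrow> Im u = 0 \<Longrightarrow> L (f u) = 0"
  shows "L X = 0"
  using has_derivative_real_direction_zero[OF assms(1-3) bounded_linear.has_derivative[OF assms(4,5)]]
    assms(6) by simp

lemma bounded_linear_lor3_fst: "bounded_linear (\<lambda>p::L4. lor3 (fst p) n)"
  by (rule bounded_linear_compose[OF bounded_bilinear.bounded_linear_left[OF bounded_bilinear_lor3]
        bounded_linear_fst])

lemma bounded_linear_off_normal: "bounded_linear (\<lambda>p::L4. p - (lor3 (fst p) n *\<^sub>R n, 0))"
  unfolding linear_conv_bounded_linear[symmetric]
  by (rule linearI) (auto simp: algebra_simps)

section \<open>The surface along the real axis\<close>

context
  fixes \<Omega> :: "complex set" and n :: L3 and \<psi> \<psi>x \<psi>y \<psi>xx \<psi>xy \<psi>yx \<psi>yy :: "complex \<Rightarrow> L4"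
  assumes open_\<Omega>: "open \<Omega>" and n: "lor3 n n = 1"
    and C2: "C2_partials (\<Omega> \<inter> {z. Im z \<ge> 0}) \<psi> \<psi>x \<psi>y \<psi>xx \<psi>xy \<psi>yx \<psi>yy"
    and conf: "conformal_immersion (\<Omega> \<inter> {z. Im z \<ge> 0}) \<psi> \<psi>x \<psi>y"
    and cmc: "cmc_half (\<Omega> \<inter> {z. Im z \<ge> 0}) \<psi> \<psi>x \<psi>y \<psi>xx \<psi>yy"
    and bdry: "\<psi> ` (\<Omega> \<inter> {z. Im z = 0}) \<subseteq> vplane n"
    and tang: "\<forall>z \<in> \<Omega> \<inter> {z. Im z = 0}. \<forall>\<eta>.
                 unit_normal (\<psi> z) (\<psi>x z) (\<psi>y z) \<eta> \<and> snd \<eta> > 0 \<longrightarrow> lor3 (fst \<eta>) n = 0"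
begin

lemma partials_has_derivative:
  assumes "w \<in> \<Omega>" "0 \<le> Im w"
  shows "(\<psi> has_derivative (\<lambda>v. Re v *\<^sub>R \<psi>x w + Im v *\<^sub>R \<psi>y w)) (at w within \<Omega> \<inter> {z. 0 \<le> Im z})"
    "(\<psi>x has_derivative (\<lambda>v. Re v *\<^sub>R \<psi>xx w + Im v *\<^sub>R \<psi>xy w)) (at w within \<Omega> \<inter> {z. 0 \<le> Im z})"
    "(\<psi>y has_derivative (\<lambda>v. Re v *\<^sub>R \<psi>yx w + Im v *\<^sub>R \<psi>yy w)) (at w within \<Omega> \<inter> {z. 0 \<le> Im z})"
  using C2 assms by (simp_all add: C2_partials_def)

lemma conformal_at:
  assumes "w \<in> \<Omega>" "0 \<le> Im w"
  shows "\<psi> w \<in> H2R" "lor4 (\<psi>x w) (\<psi>x w) = lor4 (\<psi>y w) (\<psi>y w)" "lor4 (\<psi>x w) (\<psi>y w) = 0"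
    "lor4 (\<psi>x w) (\<psi>x w) > 0"
  using conf assms unfolding conformal_immersion_def by blast+

lemma boundary_in_plane: "w \<in> \<Omega> \<Longrightarrow> Im w = 0 \<Longrightarrow> lor3 (fst (\<psi> w)) n = 0"
  using bdry by (auto simp: vplane_def)

lemma boundary_dx_in_plane:
  assumes w: "w \<in> \<Omega>" "Im w = 0"
  shows "lor3 (fst (\<psi>x w)) n = 0"
  using has_derivative_real_direction_kernel[OF open_\<Omega> w bounded_linear_lor3_fst[of n]
      partials_has_derivative(1)[OF w(1)]] w boundary_in_plane by auto

lemma boundary_dxx_in_plane:
  assumes w: "w \<in> \<Omega>" "Im w = 0"
  shows "lor3 (fst (\<psi>xx w)) n = 0"
  using has_derivative_real_direction_kernel[OF open_\<Omega> w bounded_linear_lor3_fst[of n]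
      partials_has_derivative(2)[OF w(1)]] w boundary_dx_in_plane by auto

lemma boundary_partials_tangent_to_H2:
  assumes w: "w \<in> \<Omega>" "Im w = 0"
  shows "lor3 (fst (\<psi>x w)) (fst (\<psi> w)) = 0" "lor3 (fst (\<psi>y w)) (fst (\<psi> w)) = 0"
proof -
  let ?D = "\<lambda>v. Re v *\<^sub>R \<psi>x w + Im v *\<^sub>R \<psi>y w"
  have "((\<lambda>u. fst (\<psi> u)) has_derivative (\<lambda>v. fst (?D v))) (at w within \<Omega> \<inter> {z. 0 \<le> Im z})"
    using partials_has_derivative(1)[OF w(1)] w(2) by (intro has_derivative_fst) auto
  then have der: "((\<lambda>u. lor3 (fst (\<psi> u)) (fst (\<psi> u)) + 1) has_derivative
      (\<lambda>v. lor3 (fst (\<psi> w)) (fst (?D v)) + lor3 (fst (?D v)) (fst (\<psi> w)) + 0))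
      (at w within \<Omega> \<inter> {z. 0 \<le> Im z})"
    by (intro has_derivative_add bounded_bilinear.FDERIV[OF bounded_bilinear_lor3] has_derivative_const)
  have vanish: "lor3 (fst (\<psi> u)) (fst (\<psi> u)) + 1 = 0" if "u \<in> \<Omega>" "0 \<le> Im u" for u
    using conformal_at(1)[OF that] by (auto simp: H2R_def)
  have "lor3 (fst (\<psi> w)) (fst (\<psi>x w)) + lor3 (fst (\<psi>x w)) (fst (\<psi> w)) = 0"
    using has_derivative_real_direction_zero[OF open_\<Omega> w der] vanish by simp
  moreover have "lor3 (fst (\<psi> w)) (fst (\<psi>y w)) + lor3 (fst (\<psi>y w)) (fst (\<psi> w)) = 0"
    using has_derivative_normal_direction_zero[OF open_\<Omega> w der vanish] by simp
  ultimately show "lor3 (fst (\<psi>x w)) (fst (\<psi> w)) = 0" "lor3 (fst (\<psi>y w)) (fst (\<psi> w)) = 0"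
    by (simp_all add: lor3_commute[of "fst (\<psi> w)"])
qed

lemma boundary_dy_normal_to_plane:
  assumes w: "w \<in> \<Omega>" "Im w = 0"
  shows "\<psi>y w = (lor3 (fst (\<psi>y w)) n *\<^sub>R n, 0)"
proof -
  have "w \<in> \<Omega> \<inter> {z. Im z \<ge> 0}" using w by simp
  then obtain \<eta> where \<eta>: "unit_normal (\<psi> w) (\<psi>x w) (\<psi>y w) \<eta>" "snd \<eta> > 0"
    using cmc unfolding cmc_half_def by blast
  have "lor3 (fst (\<psi> w)) (fst (\<psi> w)) = -1" using conformal_at(1)[OF w(1)] w(2)
    by (simp add: H2R_def case_prod_beta)
  then show ?thesis
  proof (rule lor4_orthogonal_complement_of_frame[OF _ n boundary_in_plane[OF w]
        boundary_partials_tangent_to_H2(1)[OF w] boundary_dx_in_plane[OF w]])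
    show "lor4 (\<psi>x w) (\<psi>x w) > 0" using conformal_at(4)[OF w(1)] w(2) by simp
    show "lor3 (fst \<eta>) n = 0" using tang w \<eta> by blast
    show "lor3 (fst \<eta>) (fst (\<psi> w)) = 0" "lor4 \<eta> \<eta> = 1" "lor4 \<eta> (\<psi>x w) = 0"
      using \<eta>(1) by (simp_all add: unit_normal_def)
    show "lor4 (\<psi>y w) \<eta> = 0" using \<eta>(1) by (simp add: unit_normal_def lor4_commute[of \<eta> "\<psi>y w"])
    show "lor4 (\<psi>y w) (\<psi>x w) = 0"
      using conformal_at(3)[OF w(1)] w(2) by (simp add: lor4_commute[of "\<psi>x w" "\<psi>y w"])
  qed (rule boundary_partials_tangent_to_H2(2)[OF w])
qed

lemma boundary_dyx_normal_to_plane: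
  assumes w: "w \<in> \<Omega>" "Im w = 0"
  shows "\<psi>yx w = (lor3 (fst (\<psi>yx w)) n *\<^sub>R n, 0)"
proof (rule right_minus_eq[THEN iffD1])
  show "\<psi>yx w - (lor3 (fst (\<psi>yx w)) n *\<^sub>R n, 0) = 0"
    by (rule has_derivative_real_direction_kernel[OF open_\<Omega> w bounded_linear_off_normal
          partials_has_derivative(3)[OF w(1)]])
      (simp_all add: w(2) right_minus_eq[THEN iffD2, OF boundary_dy_normal_to_plane])
qed

lemma boundary_dyy_in_plane:
  assumes w: "w \<in> \<Omega>" "Im w = 0"
  shows "lor3 (fst (\<psi>yy w)) n = 0"
proof -
  define a b where "a = lor3 (fst (\<psi>y w)) n" and "b = lor3 (fst (\<psi>yx w)) n"
  have y: "\<psi>y w = (a *\<^sub>R n, 0)" unfolding a_def by (rule boundary_dy_normal_to_plane[OF w])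
  have xy: "\<psi>xy w = (b *\<^sub>R n, 0)"
    unfolding C2_partials_mixed_eq[OF open_\<Omega> C2 w(1) eq_refl[OF w(2)[symmetric]]] b_def
    by (rule boundary_dyx_normal_to_plane[OF w])
  let ?D1 = "\<lambda>v. Re v *\<^sub>R \<psi>xx w + Im v *\<^sub>R \<psi>xy w" and ?D2 = "\<lambda>v. Re v *\<^sub>R \<psi>yx w + Im v *\<^sub>R \<psi>yy w"
  have "((\<lambda>u. lor4 (\<psi>x u) (\<psi>x u) - lor4 (\<psi>y u) (\<psi>y u)) has_derivative
      (\<lambda>v. (lor4 (\<psi>x w) (?D1 v) + lor4 (?D1 v) (\<psi>x w)) - (lor4 (\<psi>y w) (?D2 v) + lor4 (?D2 v) (\<psi>y w))))
      (at w within \<Omega> \<inter> {z. 0 \<le> Im z})"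
    using w by (intro has_derivative_diff bounded_bilinear.FDERIV[OF bounded_bilinear_lor4]
        partials_has_derivative) auto
  from has_derivative_normal_direction_zero[OF open_\<Omega> w this] conformal_at(2)
  have "(lor4 (\<psi>x w) (\<psi>xy w) + lor4 (\<psi>xy w) (\<psi>x w))
      - (lor4 (\<psi>y w) (\<psi>yy w) + lor4 (\<psi>yy w) (\<psi>y w)) = 0"
    by simp
  then have "a * lor3 (fst (\<psi>yy w)) n = 0"
    using boundary_dx_in_plane[OF w] by (simp add: y xy lor4_def lor3_commute[of n])
  moreover have "a \<noteq> 0" using conformal_at(2,4)[OF w(1)] w(2) by (auto simp: y lor4_def)
  ultimately show ?thesis by simp
qed

lemma vrefl_boundary_partials:
  assumes w: "w \<in> \<Omega>" "Im w = 0"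
  shows "vrefl n (\<psi> w) = \<psi> w" "vrefl n (\<psi>x w) = \<psi>x w" "- vrefl n (\<psi>y w) = \<psi>y w"
    "vrefl n (\<psi>xx w) = \<psi>xx w" "- vrefl n (\<psi>xy w) = \<psi>xy w" "- vrefl n (\<psi>yx w) = \<psi>yx w"
    "vrefl n (\<psi>yy w) = \<psi>yy w"
  using vrefl_fixes_plane boundary_in_plane[OF w] boundary_dx_in_plane[OF w]
    boundary_dxx_in_plane[OF w] boundary_dyy_in_plane[OF w]
    vrefl_negates_normal_line[OF n boundary_dy_normal_to_plane[OF w]]
    vrefl_negates_normal_line[OF n boundary_dyx_normal_to_plane[OF w]]
    C2_partials_mixed_eq[OF open_\<Omega> C2 w(1)] w(2)
  by simp_all

end

section \<open>Extension by reflection\<close>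

text \<open>The \<open>y\<close>-derivatives of \<open>z \<mapsto> \<tau> (f z\<^sup>*)\<close> are those of \<open>f\<close> with a sign change, so
  \<open>y\<close>-partials are extended with \<open>\<lambda>p. - \<tau> p\<close> in place of \<open>\<tau>\<close>.\<close>

definition reflect_extend :: "('a \<Rightarrow> 'a) \<Rightarrow> (complex \<Rightarrow> 'a) \<Rightarrow> complex \<Rightarrow> 'a" where
  "reflect_extend \<tau> f z = (if 0 \<le> Im z then f z else \<tau> (f (cnj z)))"

lemma reflect_extend_lower:
  assumes "Im z \<le> 0" "Im z = 0 \<Longrightarrow> \<tau> (f z) = f z"
  shows "reflect_extend \<tau> f z = \<tau> (f (cnj z))"
proof (cases "Im z = 0")
  case True
  then have "cnj z = z" by (simp add: complex_eq_iff)
  with True assms(2) show ?thesis by (simp add: reflect_extend_def)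
qed (use assms(1) in \<open>simp add: reflect_extend_def\<close>)

lemma has_derivative_within_Un:
  "(f has_derivative f') (at x within S) \<Longrightarrow> (f has_derivative f') (at x within T) \<Longrightarrow>
   (f has_derivative f') (at x within S \<union> T)"
  by (simp add: has_derivative_within Lim_within_Un)

lemma has_derivative_away_from_closed:
  assumes "bounded_linear f'" "closed C" "S \<subseteq> C" "x \<notin> C"
  shows "(f has_derivative f') (at x within S)"
proof -
  have "\<not> x islimpt S" using assms(2-4) islimpt_subset closed_limpt by blast
  then have "at x within S = bot" using trivial_limit_within by blast
  then show ?thesis using assms(1) by (simp add: has_derivative_bot)
qed

lemma bounded_linear_Re_Im: "bounded_linear (\<lambda>v. Re v *\<^sub>R a + Im v *\<^sub>R b)"
  by (intro bounded_linear_add bounded_linear_compose[OF bounded_linear_scaleR_left]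
      bounded_linear_Re bounded_linear_Im)

context
  fixes \<Omega> :: "complex set"
  assumes sym: "cnj ` \<Omega> = \<Omega>"
begin

lemma continuous_on_reflect_extend:
  assumes "bounded_linear \<tau>" "continuous_on (\<Omega> \<inter> {z. 0 \<le> Im z}) f"
    and "\<And>w. w \<in> \<Omega> \<Longrightarrow> Im w = 0 \<Longrightarrow> \<tau> (f w) = f w"
  shows "continuous_on \<Omega> (reflect_extend \<tau> f)"
proof -
  let ?U = "\<Omega> \<inter> {z. 0 \<le> Im z}" and ?L = "\<Omega> \<inter> {z. Im z \<le> 0}"
  have \<Omega>: "\<Omega> = ?U \<union> ?L" by auto
  have "continuous_on ?L (\<lambda>z. \<tau> (f (cnj z)))"
    using sym by (intro continuous_on_compose2[OF linear_continuous_on[OF assms(1)]]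
        continuous_on_compose2[OF assms(2)] continuous_intros) auto
  moreover have "closedin (top_of_set (?U \<union> ?L)) ?U" "closedin (top_of_set (?U \<union> ?L)) ?L"
    by (metis \<Omega> closedin_closed_Int closed_halfspace_Im_ge closed_halfspace_Im_le Int_commute)+
  moreover have "cnj z = z" if "Im z = 0" for z using that by (simp add: complex_eq_iff)
  ultimately have "continuous_on (?U \<union> ?L) (\<lambda>z. if 0 \<le> Im z then f z else \<tau> (f (cnj z)))"
    using assms(2,3) by (intro continuous_on_cases_local) auto
  then show ?thesis by (simp flip: \<Omega> add: reflect_extend_def[abs_def])
qed

lemma has_derivative_reflect_extend:
  assumes \<tau>: "bounded_linear \<tau>"
    and f: "\<And>w. w \<in> \<Omega> \<inter> {z. 0 \<le> Im z} \<Longrightarrow>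
              (f has_derivative (\<lambda>v. Re v *\<^sub>R fx w + Im v *\<^sub>R fy w)) (at w within \<Omega> \<inter> {z. 0 \<le> Im z})"
    and match: "\<And>w. w \<in> \<Omega> \<Longrightarrow> Im w = 0 \<Longrightarrow> \<tau> (f w) = f w \<and> \<tau> (fx w) = fx w \<and> - \<tau> (fy w) = fy w"
    and w: "w \<in> \<Omega>"
  shows "(reflect_extend \<tau> f has_derivative
           (\<lambda>v. Re v *\<^sub>R reflect_extend \<tau> fx w + Im v *\<^sub>R reflect_extend (\<lambda>p. - \<tau> p) fy w))
         (at w within \<Omega>)"
proof -
  let ?U = "\<Omega> \<inter> {z. 0 \<le> Im z}" and ?L = "\<Omega> \<inter> {z. Im z \<le> 0}"
  let ?D = "\<lambda>v. Re v *\<^sub>R reflect_extend \<tau> fx w + Im v *\<^sub>R reflect_extend (\<lambda>p. - \<tau> p) fy w"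
  have "(reflect_extend \<tau> f has_derivative ?D) (at w within ?U)"
  proof (cases "0 \<le> Im w")
    case True
    then have "(f has_derivative ?D) (at w within ?U)" using f w by (simp add: reflect_extend_def)
    then show ?thesis
      by (rule has_derivative_transform_within[OF _ zero_less_one]) (use w True in \<open>auto simp: reflect_extend_def\<close>)
  qed (auto intro!: has_derivative_away_from_closed bounded_linear_Re_Im closed_halfspace_Im_ge)
  moreover have "(reflect_extend \<tau> f has_derivative ?D) (at w within ?L)"
  proof (cases "Im w \<le> 0")
    case True
    have cw: "cnj w \<in> ?U" and cL: "cnj ` ?L \<subseteq> ?U" using sym w True by auto
    have "((\<lambda>z. f (cnj z)) has_derivative
        (\<lambda>v. Re (cnj v) *\<^sub>R fx (cnj w) + Im (cnj v) *\<^sub>R fy (cnj w))) (at w within ?L)"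
      using diff_chain_within[OF bounded_linear_imp_has_derivative[OF bounded_linear_cnj]
          has_derivative_subset[OF f[OF cw] cL]] by (simp add: o_def)
    from bounded_linear.has_derivative[OF \<tau> this]
    have "((\<lambda>z. \<tau> (f (cnj z))) has_derivative ?D) (at w within ?L)"
      using True match[OF w] reflect_extend_lower[of w \<tau> fx] reflect_extend_lower[of w "\<lambda>p. - \<tau> p" fy]
      by (simp add: linear_simps[OF \<tau>] algebra_simps)
    then show ?thesis
      by (rule has_derivative_transform_within[OF _ zero_less_one])
        (use w True match in \<open>auto intro!: reflect_extend_lower[symmetric]\<close>)
  qed (auto intro!: has_derivative_away_from_closed bounded_linear_Re_Im closed_halfspace_Im_le)
  moreover have "\<Omega> = ?U \<union> ?L" by auto
  ultimately show ?thesis using has_derivative_within_Un by metis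
qed

lemma C2_partials_reflect_extend:
  assumes \<tau>: "bounded_linear \<tau>"
    and C2: "C2_partials (\<Omega> \<inter> {z. 0 \<le> Im z}) \<psi> \<psi>x \<psi>y \<psi>xx \<psi>xy \<psi>yx \<psi>yy"
    and match: "\<And>w. w \<in> \<Omega> \<Longrightarrow> Im w = 0 \<Longrightarrow>
      \<tau> (\<psi> w) = \<psi> w \<and> \<tau> (\<psi>x w) = \<psi>x w \<and> - \<tau> (\<psi>y w) = \<psi>y w \<and> \<tau> (\<psi>xx w) = \<psi>xx w \<and>
      - \<tau> (\<psi>xy w) = \<psi>xy w \<and> - \<tau> (\<psi>yx w) = \<psi>yx w \<and> \<tau> (\<psi>yy w) = \<psi>yy w"
  shows "C2_partials \<Omega> (reflect_extend \<tau> \<psi>) (reflect_extend \<tau> \<psi>x) (reflect_extend (\<lambda>p. - \<tau> p) \<psi>y)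
    (reflect_extend \<tau> \<psi>xx) (reflect_extend (\<lambda>p. - \<tau> p) \<psi>xy) (reflect_extend (\<lambda>p. - \<tau> p) \<psi>yx)
    (reflect_extend \<tau> \<psi>yy)"
proof -
  have \<sigma>: "bounded_linear (\<lambda>p. - \<tau> p)" by (rule bounded_linear_minus[OF \<tau>])
  have "continuous_on \<Omega> (reflect_extend \<tau> \<psi>)" "continuous_on \<Omega> (reflect_extend \<tau> \<psi>x)"
    "continuous_on \<Omega> (reflect_extend (\<lambda>p. - \<tau> p) \<psi>y)" "continuous_on \<Omega> (reflect_extend \<tau> \<psi>xx)"
    "continuous_on \<Omega> (reflect_extend (\<lambda>p. - \<tau> p) \<psi>xy)"
    "continuous_on \<Omega> (reflect_extend (\<lambda>p. - \<tau> p) \<psi>yx)" "continuous_on \<Omega> (reflect_extend \<tau> \<psi>yy)"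
    using C2 match by (auto simp: C2_partials_def intro!: continuous_on_reflect_extend \<tau> \<sigma>)
  moreover have "(reflect_extend \<tau> \<psi> has_derivative (\<lambda>v. Re v *\<^sub>R reflect_extend \<tau> \<psi>x w
        + Im v *\<^sub>R reflect_extend (\<lambda>p. - \<tau> p) \<psi>y w)) (at w within \<Omega>)"
    "(reflect_extend \<tau> \<psi>x has_derivative (\<lambda>v. Re v *\<^sub>R reflect_extend \<tau> \<psi>xx w
        + Im v *\<^sub>R reflect_extend (\<lambda>p. - \<tau> p) \<psi>xy w)) (at w within \<Omega>)"
    "(reflect_extend (\<lambda>p. - \<tau> p) \<psi>y has_derivative (\<lambda>v. Re v *\<^sub>R reflect_extend (\<lambda>p. - \<tau> p) \<psi>yx w
        + Im v *\<^sub>R reflect_extend \<tau> \<psi>yy w)) (at w within \<Omega>)"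
    if "w \<in> \<Omega>" for w
    using has_derivative_reflect_extend[OF \<tau> _ _ that, of \<psi> \<psi>x \<psi>y]
      has_derivative_reflect_extend[OF \<tau> _ _ that, of \<psi>x \<psi>xx \<psi>xy]
      has_derivative_reflect_extend[OF \<sigma> _ _ that, of \<psi>y \<psi>yx \<psi>yy] C2 match
    by (simp_all add: C2_partials_def)
  ultimately show ?thesis by (simp add: C2_partials_def)
qed

lemma conformal_immersion_reflect_extend:
  assumes n: "lor3 n n = 1" and conf: "conformal_immersion (\<Omega> \<inter> {z. 0 \<le> Im z}) \<psi> \<psi>x \<psi>y"
  shows "conformal_immersion \<Omega> (reflect_extend (vrefl n) \<psi>) (reflect_extend (vrefl n) \<psi>x)
    (reflect_extend (\<lambda>p. - vrefl n p) \<psi>y)"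
  unfolding conformal_immersion_def
proof
  fix z assume "z \<in> \<Omega>"
  show "reflect_extend (vrefl n) \<psi> z \<in> H2R \<and>
    lor4 (reflect_extend (vrefl n) \<psi>x z) (reflect_extend (vrefl n) \<psi>x z) =
      lor4 (reflect_extend (\<lambda>p. - vrefl n p) \<psi>y z) (reflect_extend (\<lambda>p. - vrefl n p) \<psi>y z) \<and>
    lor4 (reflect_extend (vrefl n) \<psi>x z) (reflect_extend (\<lambda>p. - vrefl n p) \<psi>y z) = 0 \<and>
    lor4 (reflect_extend (vrefl n) \<psi>x z) (reflect_extend (vrefl n) \<psi>x z) > 0"
  proof (cases "0 \<le> Im z")
    case True
    then have "z \<in> \<Omega> \<inter> {z. 0 \<le> Im z}" using \<open>z \<in> \<Omega>\<close> by simp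
    then have "\<psi> z \<in> H2R \<and> lor4 (\<psi>x z) (\<psi>x z) = lor4 (\<psi>y z) (\<psi>y z) \<and>
        lor4 (\<psi>x z) (\<psi>y z) = 0 \<and> lor4 (\<psi>x z) (\<psi>x z) > 0"
      using conf unfolding conformal_immersion_def by blast
    then show ?thesis using True by (simp add: reflect_extend_def)
  next
    case False
    let ?w = "cnj z"
    have "?w \<in> \<Omega> \<inter> {z. 0 \<le> Im z}" using False sym \<open>z \<in> \<Omega>\<close> by auto
    then have "\<psi> ?w \<in> H2R \<and> lor4 (\<psi>x ?w) (\<psi>x ?w) = lor4 (\<psi>y ?w) (\<psi>y ?w) \<and>
        lor4 (\<psi>x ?w) (\<psi>y ?w) = 0 \<and> lor4 (\<psi>x ?w) (\<psi>x ?w) > 0"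
      using conf unfolding conformal_immersion_def by blast
    then show ?thesis using False vrefl_H2R[OF n] vrefl_lor4[OF n] by (simp add: reflect_extend_def)
  qed
qed

lemma cmc_half_reflect_extend:
  assumes n: "lor3 n n = 1" and cmc: "cmc_half (\<Omega> \<inter> {z. 0 \<le> Im z}) \<psi> \<psi>x \<psi>y \<psi>xx \<psi>yy"
  shows "cmc_half \<Omega> (reflect_extend (vrefl n) \<psi>) (reflect_extend (vrefl n) \<psi>x)
    (reflect_extend (\<lambda>p. - vrefl n p) \<psi>y) (reflect_extend (vrefl n) \<psi>xx) (reflect_extend (vrefl n) \<psi>yy)"
  unfolding cmc_half_def
proof
  fix z assume "z \<in> \<Omega>"
  show "\<exists>\<eta>. unit_normal (reflect_extend (vrefl n) \<psi> z) (reflect_extend (vrefl n) \<psi>x z)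
      (reflect_extend (\<lambda>p. - vrefl n p) \<psi>y z) \<eta> \<and> 0 < snd \<eta> \<and>
    lor4 (reflect_extend (vrefl n) \<psi>xx z + reflect_extend (vrefl n) \<psi>yy z) \<eta> /
      (2 * lor4 (reflect_extend (vrefl n) \<psi>x z) (reflect_extend (vrefl n) \<psi>x z)) = 1 / 2"
  proof (cases "0 \<le> Im z")
    case True
    then show ?thesis using cmc \<open>z \<in> \<Omega>\<close> by (simp add: cmc_half_def reflect_extend_def)
  next
    case False
    let ?w = "cnj z"
    have "?w \<in> \<Omega> \<inter> {z. 0 \<le> Im z}" using False sym \<open>z \<in> \<Omega>\<close> by auto
    then obtain \<eta> where \<eta>: "unit_normal (\<psi> ?w) (\<psi>x ?w) (\<psi>y ?w) \<eta>" "0 < snd \<eta>"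
        "lor4 (\<psi>xx ?w + \<psi>yy ?w) \<eta> / (2 * lor4 (\<psi>x ?w) (\<psi>x ?w)) = 1 / 2"
      using cmc unfolding cmc_half_def by blast
    have "unit_normal (vrefl n (\<psi> ?w)) (vrefl n (\<psi>x ?w)) (- vrefl n (\<psi>y ?w)) (vrefl n \<eta>)"
      using \<eta>(1) vrefl_lor3[OF n] vrefl_lor4[OF n] by (simp add: unit_normal_def)
    moreover have "vrefl n (\<psi>xx ?w) + vrefl n (\<psi>yy ?w) = vrefl n (\<psi>xx ?w + \<psi>yy ?w)"
      by (simp add: linear_simps[OF bounded_linear_vrefl])
    ultimately show ?thesis using False \<eta>(2,3) vrefl_lor4[OF n]
      by (intro exI[of _ "vrefl n \<eta>"]) (simp add: reflect_extend_def)
  qed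
qed

end

theorem mainTheorem13:
  fixes \<Omega> :: "complex set" and n :: L3
    and \<psi> \<psi>x \<psi>y \<psi>xx \<psi>xy \<psi>yx \<psi>yy :: "complex \<Rightarrow> L4"
  assumes dom: "open \<Omega>" "connected \<Omega>" "\<Omega> \<noteq> {}"
    and sym: "cnj ` \<Omega> = \<Omega>"
    and n: "lor3 n n = 1"
    and C2: "C2_partials (\<Omega> \<inter> {z. Im z \<ge> 0}) \<psi> \<psi>x \<psi>y \<psi>xx \<psi>xy \<psi>yx \<psi>yy"
    and conf: "conformal_immersion (\<Omega> \<inter> {z. Im z \<ge> 0}) \<psi> \<psi>x \<psi>y"
    and rvp: "regular_vertical_projection (\<Omega> \<inter> {z. Im z \<ge> 0}) \<psi> \<psi>x \<psi>y"
    and cmc: "cmc_half (\<Omega> \<inter> {z. Im z \<ge> 0}) \<psi> \<psi>x \<psi>y \<psi>xx \<psi>yy"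
    and bdry: "\<psi> ` (\<Omega> \<inter> {z. Im z = 0}) \<subseteq> vplane n"
    and tang: "\<forall>z \<in> \<Omega> \<inter> {z. Im z = 0}. \<forall>\<eta>.
                 unit_normal (\<psi> z) (\<psi>x z) (\<psi>y z) \<eta> \<and> snd \<eta> > 0 \<longrightarrow> lor3 (fst \<eta>) n = 0"
  shows "\<exists>\<Phi>x \<Phi>y \<Phi>xx \<Phi>xy \<Phi>yx \<Phi>yy.
           C2_partials \<Omega> (\<lambda>z. if Im z \<ge> 0 then \<psi> z else vrefl n (\<psi> (cnj z)))
                         \<Phi>x \<Phi>y \<Phi>xx \<Phi>xy \<Phi>yx \<Phi>yy \<and>
           conformal_immersion \<Omega> (\<lambda>z. if Im z \<ge> 0 then \<psi> z else vrefl n (\<psi> (cnj z))) \<Phi>x \<Phi>y \<and>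
           cmc_half \<Omega> (\<lambda>z. if Im z \<ge> 0 then \<psi> z else vrefl n (\<psi> (cnj z))) \<Phi>x \<Phi>y \<Phi>xx \<Phi>yy"
proof -
  have extension: "(\<lambda>z. if Im z \<ge> 0 then \<psi> z else vrefl n (\<psi> (cnj z))) = reflect_extend (vrefl n) \<psi>"
    by (simp add: fun_eq_iff reflect_extend_def)
  note boundary = vrefl_boundary_partials[OF dom(1) n C2 conf cmc bdry tang]
  show ?thesis
    unfolding extension
    using C2_partials_reflect_extend[OF sym bounded_linear_vrefl C2] boundary
      conformal_immersion_reflect_extend[OF sym n conf] cmc_half_reflect_extend[OF sym n cmc]
    by blast
qed

end
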